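(* Fix $0<\alpha<1$ and an integer $l\ge1$, let $\phi_\alpha(t)=t^{\alpha-1}E_{\alpha,\alpha}(-t^{\alpha})$, and let $P_{n,\alpha,l}(t)=\frac{(l)_n}{n!}t^{(n+l)\alpha-1}E^{n+l}_{\alpha,(n+l)\alpha}(-t^{\alpha})$. Define $m_{\alpha,l}(t)=\sum_{n=0}^\infty n\,P_{n,\alpha,l}(t)$ for $t>0$. Then $$m_{\alpha,l}(t)=-\frac{\partial}{\partial k}\Big[t^{\alpha l-1}E^{l}_{\alpha,\alpha l}\big(-(1-e^{-k})t^{\alpha}\big)\Big]_{k=0}=\frac{l\,t^{l\alpha+\alpha-1}}{\Gamma((l+1)\alpha)},$$ and $m_{\alpha,l}$ satisfies the renewal equation $$m_{\alpha,l}(t)=l\,(I^{\alpha l}_{0+}\phi_\alpha)(t)+(m_{\alpha,l}*\phi_\alpha)(t),\qquad t>0.$$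
   Context: $E^{\gamma}_{\alpha,\beta}(x)=\sum_{k\ge0}\frac{(\gamma)_k x^k}{\Gamma(\alpha k+\beta)\,k!}$ with Pochhammer symbol $(\gamma)_k$, $E_{\alpha,\beta}=E^1_{\alpha,\beta}$. $(I^{\beta}_{0+}f)(t)=\frac{1}{\Gamma(\beta)}\int_0^t(t-u)^{\beta-1}f(u)\,du$ for $\beta>0$. Laplace convolution $(f*g)(t)=\int_0^t f(t-u)g(u)\,du$. *)

theory Defs
  imports "HOL-Analysis.Analysis"
begin

definition ML3 :: "real \<Rightarrow> real \<Rightarrow> real \<Rightarrow> real \<Rightarrow> real" where
  "ML3 \<gamma> \<alpha> \<beta> x = (\<Sum>k. pochhammer \<gamma> k * x ^ k / (Gamma (\<alpha> * real k + \<beta>) * fact k))"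

definition ML2 :: "real \<Rightarrow> real \<Rightarrow> real \<Rightarrow> real" where
  "ML2 \<alpha> \<beta> x = ML3 1 \<alpha> \<beta> x"

definition RL_int :: "real \<Rightarrow> (real \<Rightarrow> real) \<Rightarrow> real \<Rightarrow> real" where
  "RL_int \<beta> f t = (1 / Gamma \<beta>) * integral {0..t} (\<lambda>u. (t - u) powr (\<beta> - 1) * f u)"

definition lconv :: "(real \<Rightarrow> real) \<Rightarrow> (real \<Rightarrow> real) \<Rightarrow> real \<Rightarrow> real" where
  "lconv f g t = integral {0..t} (\<lambda>u. f (t - u) * g u)"

definition phi_ML :: "real \<Rightarrow> real \<Rightarrow> real" where
  "phi_ML \<alpha> t = t powr (\<alpha> - 1) * ML2 \<alpha> \<alpha> (- (t powr \<alpha>))"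

definition P_nal :: "nat \<Rightarrow> real \<Rightarrow> nat \<Rightarrow> real \<Rightarrow> real" where
  "P_nal n \<alpha> l t = pochhammer (real l) n / fact n
      * t powr ((real n + real l) * \<alpha> - 1)
      * ML3 (real n + real l) \<alpha> ((real n + real l) * \<alpha>) (- (t powr \<alpha>))"

definition m_al :: "real \<Rightarrow> nat \<Rightarrow> real \<Rightarrow> real" where
  "m_al \<alpha> l t = (\<Sum>n. real n * P_nal n \<alpha> l t)"

end

theory Submission
  imports Defs
begin

text \<open>Expanding each \<open>P_{n,\<alpha>,l}(t)\<close> in powers of \<open>t^\<alpha>\<close> and regrouping the double series
  \<open>\<Sum>_n n P_{n,\<alpha>,l}(t)\<close> along the antidiagonals \<open>n + k = N\<close>, the \<open>N\<close>-th group carries the factor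
  \<open>\<Sum>_{n\<le>N} n (N choose n) (-1)^{N-n}\<close>, which vanishes unless \<open>N = 1\<close>. So a single term survives:
  \<open>m_{\<alpha>,l}(t) = l t^{(l+1)\<alpha>-1} / \<Gamma>((l+1)\<alpha>)\<close>. The regrouping is justified by absolute convergence,
  from the ratio test and the decay of \<open>\<Gamma>(z)/\<Gamma>(z+\<alpha>)\<close> (log-convexity of \<open>\<Gamma>\<close>). The \<open>k\<close>-derivative
  is the chain rule with \<open>(E^\<gamma>_{\<alpha>,\<beta>})'(0) = \<gamma>/\<Gamma>(\<alpha>+\<beta>)\<close>.

  For the renewal equation, integrating the series of \<open>\<phi>_\<alpha>\<close> termwise (dominated convergence and the
  Beta integral) gives \<open>I^\<beta> \<phi>_\<alpha> = \<Sum>_k (-1)^k t^{\<beta>+(k+1)\<alpha>-1} / \<Gamma>(\<beta>+(k+1)\<alpha>)\<close>, so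
  \<open>I^\<beta> \<phi>_\<alpha> + I^{\<beta>+\<alpha>} \<phi>_\<alpha>\<close> telescopes to \<open>t^{\<beta>+\<alpha>-1} / \<Gamma>(\<beta>+\<alpha>)\<close>. As \<open>m_{\<alpha>,l}\<close> is a power
  of \<open>t\<close>, \<open>m_{\<alpha>,l} * \<phi>_\<alpha> = l I^{(l+1)\<alpha>} \<phi>_\<alpha>\<close>, and the case \<open>\<beta> = l\<alpha>\<close> is the renewal equation.\<close>

lemma Gamma_quotient_le_powr:
  fixes z a :: real
  assumes a: "a > 0" and z: "z > 1"
  shows "Gamma z / Gamma (z + a) \<le> (z - 1) powr (- a)"
proof -
  have pos: "Gamma (z - 1) > 0" "Gamma z > 0" "Gamma (z + a) > 0"
    using a z by auto
  have Gamma_rec: "Gamma z = (z - 1) * Gamma (z - 1)"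
    using Gamma_plus1[of "z - 1"] z nonpos_Ints_nonpos[of "z - 1"] by force
  have "ln (Gamma z) = ln (z - 1) + ln (Gamma (z - 1))"
    unfolding Gamma_rec using pos(1) z by (simp add: ln_mult_pos)
  then have ln_Gamma_pred: "ln (Gamma (z - 1)) = ln (Gamma z) - ln (z - 1)"
    by simp
  \<comment> \<open>log-convexity of \<open>\<Gamma>\<close> at \<open>z = (a (z - 1) + (z + a)) / (1 + a)\<close>\<close>
  have weight: "1 - 1 / (1 + a) = a / (1 + a)"
    using a by (simp add: divide_simps)
  have "z = (1 - 1 / (1 + a)) *\<^sub>R (z - 1) + (1 / (1 + a)) *\<^sub>R (z + a)"
    using a unfolding weight by (simp add: add_divide_distrib[symmetric] divide_simps) (simp add: algebra_simps)
  then have "ln (Gamma z) \<le> a / (1 + a) * ln (Gamma (z - 1)) + 1 / (1 + a) * ln (Gamma (z + a))"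
    using convex_onD[OF log_convex_Gamma_real, of "1 / (1 + a)" "z - 1" "z + a"] a z
    unfolding weight by simp
  then have "(1 + a) * ln (Gamma z) \<le> (1 + a) * (a / (1 + a) * ln (Gamma (z - 1)) + 1 / (1 + a) * ln (Gamma (z + a)))"
    by (rule mult_left_mono) (use a in simp)
  also have "\<dots> = a * ln (Gamma (z - 1)) + ln (Gamma (z + a))"
    using a by (simp add: distrib_left)
  finally have "ln (Gamma z) - ln (Gamma (z + a)) \<le> - a * ln (z - 1)"
    unfolding ln_Gamma_pred by (simp add: algebra_simps)
  then have "exp (ln (Gamma z) - ln (Gamma (z + a))) \<le> exp (- a * ln (z - 1))"
    by simp
  then show ?thesis
    using pos z by (simp add: exp_diff powr_def)
qed

lemma Gamma_quotient_tendsto_zero: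
  fixes a :: real and f :: "'a \<Rightarrow> real"
  assumes a: "a > 0" and f: "filterlim f at_top F"
  shows "((\<lambda>x. Gamma (f x) / Gamma (f x + a)) \<longlongrightarrow> 0) F"
proof (rule tendsto_sandwich)
  have ev: "eventually (\<lambda>x. f x > 1) F"
    using f by (simp add: filterlim_at_top_dense)
  show "eventually (\<lambda>x. 0 \<le> Gamma (f x) / Gamma (f x + a)) F"
    using ev by eventually_elim (use a in \<open>auto intro!: divide_nonneg_pos less_imp_le\<close>)
  show "eventually (\<lambda>x. Gamma (f x) / Gamma (f x + a) \<le> (f x - 1) powr (- a)) F"
    using ev by eventually_elim (rule Gamma_quotient_le_powr[OF a])
  have "filterlim (\<lambda>x. -1 + f x) at_top F"
    by (rule filterlim_tendsto_add_at_top[OF tendsto_const f])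
  then have f_pred: "filterlim (\<lambda>x. f x - 1) at_top F"
    by simp
  show "((\<lambda>x. (f x - 1) powr (- a)) \<longlongrightarrow> 0) F"
    by (rule tendsto_neg_powr[OF _ f_pred]) (use a in simp)
qed simp

lemma abs_ML3_term_Suc:
  fixes \<alpha> \<beta> \<gamma> y :: real
  assumes "\<alpha> > 0" and "\<alpha> * real n + \<beta> > 0"
  shows "\<bar>pochhammer \<gamma> (Suc n)\<bar> * \<bar>y\<bar> ^ Suc n / (\<bar>Gamma (\<alpha> * real (Suc n) + \<beta>)\<bar> * fact (Suc n))
    = \<bar>pochhammer \<gamma> n\<bar> * \<bar>y\<bar> ^ n / (\<bar>Gamma (\<alpha> * real n + \<beta>)\<bar> * fact n)
      * (\<bar>\<gamma> + real n\<bar> / (real n + 1) * \<bar>y\<bar> * (Gamma (\<alpha> * real n + \<beta>) / Gamma (\<alpha> * real n + \<beta> + \<alpha>)))"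
proof -
  have Gamma_pos: "Gamma (\<alpha> * real n + \<beta>) > 0" "Gamma (\<alpha> * real n + \<beta> + \<alpha>) > 0"
    using assms by auto
  have Gamma_Suc: "Gamma (\<alpha> * real (Suc n) + \<beta>) = Gamma (\<alpha> * real n + \<beta> + \<alpha>)"
    by (simp add: algebra_simps)
  have "\<bar>pochhammer \<gamma> (Suc n)\<bar> * \<bar>y\<bar> ^ Suc n / (\<bar>Gamma (\<alpha> * real (Suc n) + \<beta>)\<bar> * fact (Suc n))
      = \<bar>pochhammer \<gamma> n\<bar> * \<bar>\<gamma> + real n\<bar> * (\<bar>y\<bar> ^ n * \<bar>y\<bar>)
        / (Gamma (\<alpha> * real n + \<beta> + \<alpha>) * (fact n * (real n + 1)))"
    using Gamma_pos by (simp only: Gamma_Suc) (simp add: pochhammer_Suc abs_mult mult_ac)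
  also have "\<dots> = \<bar>pochhammer \<gamma> n\<bar> * \<bar>y\<bar> ^ n / (\<bar>Gamma (\<alpha> * real n + \<beta>)\<bar> * fact n)
      * (\<bar>\<gamma> + real n\<bar> / (real n + 1) * \<bar>y\<bar> * (Gamma (\<alpha> * real n + \<beta>) / Gamma (\<alpha> * real n + \<beta> + \<alpha>)))"
    using Gamma_pos by (simp add: field_simps)
  finally show ?thesis .
qed

lemma summable_abs_ML3_terms:
  fixes \<alpha> \<beta> \<gamma> y :: real
  assumes \<alpha>: "\<alpha> > 0"
  shows "summable (\<lambda>k. \<bar>pochhammer \<gamma> k\<bar> * \<bar>y\<bar> ^ k / (\<bar>Gamma (\<alpha> * real k + \<beta>)\<bar> * fact k))"
    (is "summable ?f")
proof -
  define q where "q n = Gamma (\<alpha> * real n + \<beta>) / Gamma (\<alpha> * real n + \<beta> + \<alpha>)" for n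
  have "filterlim (\<lambda>n. \<beta> + \<alpha> * real n) at_top sequentially"
    by (intro filterlim_tendsto_add_at_top[OF tendsto_const]
          filterlim_tendsto_pos_mult_at_top[OF tendsto_const \<alpha> filterlim_real_sequentially])
  then have lin: "filterlim (\<lambda>n. \<alpha> * real n + \<beta>) at_top sequentially"
    by (simp add: add.commute)
  have "(\<lambda>n. (\<bar>\<gamma>\<bar> + 1) * \<bar>y\<bar> * q n) \<longlonglongrightarrow> (\<bar>\<gamma>\<bar> + 1) * \<bar>y\<bar> * 0"
    unfolding q_def by (intro tendsto_mult_left Gamma_quotient_tendsto_zero[OF \<alpha> lin])
  then have "eventually (\<lambda>n. (\<bar>\<gamma>\<bar> + 1) * \<bar>y\<bar> * q n < 1 / 2) sequentially"
    by (rule order_tendstoD(2)) simp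
  moreover have "eventually (\<lambda>n. \<alpha> * real n + \<beta> > 0) sequentially"
    using lin by (simp add: filterlim_at_top_dense)
  ultimately have "eventually (\<lambda>n. (\<bar>\<gamma>\<bar> + 1) * \<bar>y\<bar> * q n < 1 / 2 \<and> \<alpha> * real n + \<beta> > 0) sequentially"
    by eventually_elim simp
  then obtain N where N: "\<And>n. n \<ge> N \<Longrightarrow> (\<bar>\<gamma>\<bar> + 1) * \<bar>y\<bar> * q n < 1 / 2 \<and> \<alpha> * real n + \<beta> > 0"
    unfolding eventually_sequentially by blast
  show ?thesis
  proof (rule summable_ratio_test[where c = "1 / 2" and N = N])
    fix n assume "n \<ge> N"
    note N = N[OF this]
    have "\<bar>\<gamma> + real n\<bar> \<le> (\<bar>\<gamma>\<bar> + 1) * (real n + 1)"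
      by (simp add: algebra_simps abs_triangle_ineq[THEN order_trans])
    then have "\<bar>\<gamma> + real n\<bar> / (real n + 1) * \<bar>y\<bar> * q n \<le> (\<bar>\<gamma>\<bar> + 1) * \<bar>y\<bar> * q n"
      using N \<alpha> by (intro mult_right_mono) (auto simp: q_def field_simps)
    with N have "\<bar>\<gamma> + real n\<bar> / (real n + 1) * \<bar>y\<bar> * q n \<le> 1 / 2"
      by linarith
    then have "?f (Suc n) \<le> ?f n * (1 / 2)"
      unfolding abs_ML3_term_Suc[OF \<alpha> conjunct2[OF N]] q_def[symmetric] by (rule mult_left_mono) simp
    then show "norm (?f (Suc n)) \<le> 1 / 2 * norm (?f n)"
      by simp
  qed simp
qed

lemma summable_ML3_terms:
  fixes \<alpha> \<beta> \<gamma> x :: real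
  assumes "\<alpha> > 0"
  shows "summable (\<lambda>k. pochhammer \<gamma> k * x ^ k / (Gamma (\<alpha> * real k + \<beta>) * fact k))"
  by (rule summable_norm_cancel)
     (simp add: abs_mult power_abs summable_abs_ML3_terms[OF assms])

lemma sums_ML3:
  fixes \<alpha> \<beta> \<gamma> x :: real
  assumes "\<alpha> > 0"
  shows "(\<lambda>k. pochhammer \<gamma> k * x ^ k / (Gamma (\<alpha> * real k + \<beta>) * fact k)) sums ML3 \<gamma> \<alpha> \<beta> x"
  unfolding ML3_def by (rule summable_sums[OF summable_ML3_terms[OF assms]])

lemma ML3_has_real_derivative_0:
  fixes \<alpha> \<beta> \<gamma> :: real
  assumes "\<alpha> > 0"
  shows "(ML3 \<gamma> \<alpha> \<beta> has_real_derivative \<gamma> / Gamma (\<alpha> + \<beta>)) (at 0)"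
proof -
  define c where "c k = pochhammer \<gamma> k / (Gamma (\<alpha> * real k + \<beta>) * fact k)" for k
  have ML3_eq: "ML3 \<gamma> \<alpha> \<beta> = (\<lambda>x. \<Sum>k. c k * x ^ k)"
    by (simp add: fun_eq_iff ML3_def c_def)
  have "summable (\<lambda>k. c k * x ^ k)" for x
    using summable_ML3_terms[OF assms, of \<gamma> x \<beta>] by (simp add: c_def)
  then have "((\<lambda>x. \<Sum>k. c k * x ^ k) has_real_derivative (\<Sum>k. diffs c k * 0 ^ k)) (at 0)"
    by (rule termdiffs_strong_converges_everywhere)
  moreover have "(\<Sum>k. diffs c k * (0::real) ^ k) = \<gamma> / Gamma (\<alpha> + \<beta>)"
    by (simp only: powser_zero) (simp add: diffs_def c_def)
  ultimately show ?thesis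
    by (simp add: ML3_eq)
qed

lemma ML3_one_minus_exp_has_real_derivative_0:
  fixes \<alpha> \<beta> \<gamma> x :: real
  assumes "\<alpha> > 0"
  shows "((\<lambda>k. ML3 \<gamma> \<alpha> \<beta> (- (1 - exp (- k)) * x)) has_real_derivative - (\<gamma> * x / Gamma (\<alpha> + \<beta>))) (at 0)"
proof -
  have inner: "((\<lambda>k. - (1 - exp (- k)) * x) has_real_derivative - x) (at 0)"
    by (auto intro!: derivative_eq_intros)
  have outer: "(ML3 \<gamma> \<alpha> \<beta> has_real_derivative \<gamma> / Gamma (\<alpha> + \<beta>)) (at (- (1 - exp (- 0)) * x))"
    using ML3_has_real_derivative_0[OF assms] by simp
  show ?thesis
    using DERIV_chain2[OF outer inner] by simp
qed

lemma has_integral_Beta_interval: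
  fixes a b t :: real
  assumes a: "a > 0" and b: "b > 0" and t: "t > 0"
  shows "((\<lambda>u. (t - u) powr (a - 1) * u powr (b - 1))
           has_integral Gamma a * Gamma b / Gamma (a + b) * t powr (a + b - 1)) {0..t}"
proof -
  have "((\<lambda>s. s powr (b - 1) * (1 - s) powr (a - 1)) has_integral Beta b a) (cbox 0 1)"
    using has_integral_Beta_real[OF b a] by simp
  from has_integral_affinity'[OF this, of "1 / t" 0] t
  have "((\<lambda>u. (u / t) powr (b - 1) * (1 - u / t) powr (a - 1)) has_integral t * Beta b a) {0..t}"
    by simp
  then have "((\<lambda>u. t powr (a + b - 2) * ((u / t) powr (b - 1) * (1 - u / t) powr (a - 1)))
      has_integral t powr (a + b - 2) * (t * Beta b a)) {0..t}"
    by (rule has_integral_mult_right)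
  moreover have "t powr (a + b - 2) * ((u / t) powr (b - 1) * (1 - u / t) powr (a - 1))
      = (t - u) powr (a - 1) * u powr (b - 1)" if "u \<in> {0..t}" for u
  proof -
    have "1 - u / t = (t - u) / t"
      using t by (simp add: field_simps)
    moreover have "t powr (a + b - 2) = t powr (b - 1) * t powr (a - 1)"
      by (simp add: powr_add[symmetric] algebra_simps)
    ultimately show ?thesis
      using t that by (simp add: powr_divide field_simps)
  qed
  moreover have "t powr (a + b - 2) * (t * Beta b a) = Gamma a * Gamma b / Gamma (a + b) * t powr (a + b - 1)"
    using t by (simp add: Beta_def powr_add[symmetric] algebra_simps powr_mult_base)
  ultimately show ?thesis
    by (metis (no_types, lifting) has_integral_cong)
qed

lemma powr_mult_minus_powr_power:
  fixes t a b :: real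
  assumes "t > 0"
  shows "t powr a * (- (t powr b)) ^ k = (-1) ^ k * t powr (a + b * real k)"
  using assms by (subst power_minus) (simp add: powr_power powr_add mult_ac)

lemma phi_ML_sums:
  fixes \<alpha> u :: real
  assumes \<alpha>: "\<alpha> > 0" and u: "u \<ge> 0"
  shows "(\<lambda>k. (-1) ^ k * u powr (\<alpha> * (real k + 1) - 1) / Gamma (\<alpha> * (real k + 1))) sums phi_ML \<alpha> u"
proof (cases "u = 0")
  case True
  then show ?thesis
    by (simp add: phi_ML_def)
next
  case False
  with u have "u > 0"
    by simp
  have "(\<lambda>k. u powr (\<alpha> - 1) * (pochhammer 1 k * (- (u powr \<alpha>)) ^ k / (Gamma (\<alpha> * real k + \<alpha>) * fact k)))
      sums phi_ML \<alpha> u"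
    unfolding phi_ML_def ML2_def by (intro sums_mult sums_ML3 \<alpha>)
  moreover have "u powr (\<alpha> - 1) * (pochhammer 1 k * (- (u powr \<alpha>)) ^ k / (Gamma (\<alpha> * real k + \<alpha>) * fact k))
      = (-1) ^ k * u powr (\<alpha> * (real k + 1) - 1) / Gamma (\<alpha> * (real k + 1))" for k
  proof -
    have "u powr (\<alpha> - 1) * (- (u powr \<alpha>)) ^ k = (-1) ^ k * u powr (\<alpha> * (real k + 1) - 1)"
      using powr_mult_minus_powr_power[OF \<open>u > 0\<close>] by (simp add: algebra_simps)
    moreover have "\<alpha> * real k + \<alpha> = \<alpha> * (real k + 1)"
      by (simp add: algebra_simps)
    ultimately show ?thesis
      by (simp flip: pochhammer_fact)
  qed
  ultimately show ?thesis
    by simp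
qed

lemma phi_ML_partial_sums_bound:
  fixes \<alpha> u t :: real
  assumes \<alpha>: "\<alpha> > 0" and u: "0 \<le> u" "u \<le> t"
  shows "\<bar>\<Sum>k<n. (-1) ^ k * u powr (\<alpha> * (real k + 1) - 1) / Gamma (\<alpha> * (real k + 1))\<bar>
    \<le> u powr (\<alpha> - 1) * ML2 \<alpha> \<alpha> (t powr \<alpha>)"
proof -
  define d where "d k = (t powr \<alpha>) ^ k / Gamma (\<alpha> * real k + \<alpha>)" for k
  have Gamma_pos: "Gamma (\<alpha> * real k + \<alpha>) > 0" for k
    using \<alpha> by (simp add: add_nonneg_pos)
  have d_sums: "d sums ML2 \<alpha> \<alpha> (t powr \<alpha>)"
    using sums_ML3[OF \<alpha>, where \<gamma> = 1 and \<beta> = \<alpha> and x = "t powr \<alpha>"]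
    unfolding d_def ML2_def by (simp flip: pochhammer_fact)
  have power_le: "u powr (\<alpha> * (real k + 1) - 1) \<le> u powr (\<alpha> - 1) * (t powr \<alpha>) ^ k" for k
  proof (cases "u = 0")
    case False
    then have "u powr (\<alpha> * (real k + 1) - 1) = u powr (\<alpha> - 1) * (u powr \<alpha>) ^ k"
      using u by (simp add: powr_power powr_add[symmetric] algebra_simps)
    also have "\<dots> \<le> u powr (\<alpha> - 1) * (t powr \<alpha>) ^ k"
      using u \<alpha> by (intro mult_left_mono power_mono powr_mono2) auto
    finally show ?thesis .
  qed simp
  have term_le: "\<bar>(-1) ^ k * u powr (\<alpha> * (real k + 1) - 1) / Gamma (\<alpha> * (real k + 1))\<bar> \<le> u powr (\<alpha> - 1) * d k" for k
  proof -
    have "\<alpha> * (real k + 1) = \<alpha> * real k + \<alpha>"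
      by (simp add: algebra_simps)
    then have "\<bar>(-1) ^ k * u powr (\<alpha> * (real k + 1) - 1) / Gamma (\<alpha> * (real k + 1))\<bar>
        = u powr (\<alpha> * (real k + 1) - 1) / Gamma (\<alpha> * real k + \<alpha>)"
      using Gamma_pos[of k] by (simp add: abs_mult)
    also have "\<dots> \<le> u powr (\<alpha> - 1) * (t powr \<alpha>) ^ k / Gamma (\<alpha> * real k + \<alpha>)"
      using Gamma_pos[of k] power_le[of k] by (simp add: divide_right_mono)
    finally show ?thesis
      by (simp add: d_def)
  qed
  have "\<bar>\<Sum>k<n. (-1) ^ k * u powr (\<alpha> * (real k + 1) - 1) / Gamma (\<alpha> * (real k + 1))\<bar>
      \<le> u powr (\<alpha> - 1) * (\<Sum>k<n. d k)"
    unfolding sum_distrib_left by (rule order_trans[OF sum_abs sum_mono[OF term_le]])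
  also have "\<dots> \<le> u powr (\<alpha> - 1) * ML2 \<alpha> \<alpha> (t powr \<alpha>)"
  proof (rule mult_left_mono)
    show "(\<Sum>k<n. d k) \<le> ML2 \<alpha> \<alpha> (t powr \<alpha>)"
      unfolding sums_unique[OF d_sums]
      by (rule sum_le_suminf) (use d_sums in \<open>simp add: sums_iff\<close>, use Gamma_pos in \<open>auto simp: d_def intro!: divide_nonneg_pos\<close>)
  qed simp
  finally show ?thesis .
qed

lemma has_integral_RL_phi_ML_partial_sum:
  fixes \<alpha> \<beta> t :: real
  assumes \<alpha>: "\<alpha> > 0" and \<beta>: "\<beta> > 0" and t: "t > 0"
  shows "((\<lambda>u. (t - u) powr (\<beta> - 1) * (\<Sum>k<n. (-1) ^ k * u powr (\<alpha> * (real k + 1) - 1) / Gamma (\<alpha> * (real k + 1))))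
    has_integral Gamma \<beta> * (\<Sum>k<n. (-1) ^ k * t powr (\<beta> + \<alpha> * (real k + 1) - 1) / Gamma (\<beta> + \<alpha> * (real k + 1))))
    {0..t}"
  unfolding sum_distrib_left
proof (intro has_integral_sum)
  fix k
  have Gamma_pos: "Gamma (\<alpha> * (real k + 1)) > 0"
    using \<alpha> by simp
  then have "(-1) ^ k / Gamma (\<alpha> * (real k + 1)) * (Gamma \<beta> * Gamma (\<alpha> * (real k + 1))
      / Gamma (\<beta> + \<alpha> * (real k + 1)) * t powr (\<beta> + \<alpha> * (real k + 1) - 1))
    = Gamma \<beta> * ((-1) ^ k * t powr (\<beta> + \<alpha> * (real k + 1) - 1) / Gamma (\<beta> + \<alpha> * (real k + 1)))"
    by (simp add: field_simps)
  with has_integral_mult_right[OF has_integral_Beta_interval[OF \<beta> _ t, of "\<alpha> * (real k + 1)"],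
      of "(-1) ^ k / Gamma (\<alpha> * (real k + 1))"] \<alpha> Gamma_pos
  show "((\<lambda>u. (t - u) powr (\<beta> - 1) * ((-1) ^ k * u powr (\<alpha> * (real k + 1) - 1) / Gamma (\<alpha> * (real k + 1))))
    has_integral Gamma \<beta> * ((-1) ^ k * t powr (\<beta> + \<alpha> * (real k + 1) - 1) / Gamma (\<beta> + \<alpha> * (real k + 1))))
    {0..t}"
    by (simp add: mult_ac)
qed simp

lemma RL_int_phi_ML:
  fixes \<alpha> \<beta> t :: real
  assumes \<alpha>: "\<alpha> > 0" and \<beta>: "\<beta> > 0" and t: "t > 0"
  shows "(\<lambda>u. (t - u) powr (\<beta> - 1) * phi_ML \<alpha> u) integrable_on {0..t}"
    and "(\<lambda>k. (-1) ^ k * t powr (\<beta> + \<alpha> * (real k + 1) - 1) / Gamma (\<beta> + \<alpha> * (real k + 1)))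
           sums RL_int \<beta> (phi_ML \<alpha>) t"
proof -
  define s where "s k u = (-1) ^ k * u powr (\<alpha> * (real k + 1) - 1) / Gamma (\<alpha> * (real k + 1))" for k u
  define a where "a k = (-1) ^ k * t powr (\<beta> + \<alpha> * (real k + 1) - 1) / Gamma (\<beta> + \<alpha> * (real k + 1))" for k
  define f where "f n u = (t - u) powr (\<beta> - 1) * (\<Sum>k<n. s k u)" for n u
  define g where "g u = (t - u) powr (\<beta> - 1) * phi_ML \<alpha> u" for u
  define h where "h u = ML2 \<alpha> \<alpha> (t powr \<alpha>) * ((t - u) powr (\<beta> - 1) * u powr (\<alpha> - 1))" for u
  have f_integral: "(f n has_integral Gamma \<beta> * (\<Sum>k<n. a k)) {0..t}" for n
    unfolding f_def s_def a_def by (rule has_integral_RL_phi_ML_partial_sum[OF \<alpha> \<beta> t])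
  have h_integrable: "h integrable_on {0..t}"
    unfolding h_def
    by (rule has_integral_integrable[OF has_integral_mult_right[OF has_integral_Beta_interval[OF \<beta> \<alpha> t]]])
  have f_le_h: "norm (f n u) \<le> h u" if "u \<in> {0..t}" for n u
  proof -
    have "norm (f n u) = (t - u) powr (\<beta> - 1) * \<bar>\<Sum>k<n. s k u\<bar>"
      by (simp add: f_def abs_mult)
    also have "\<dots> \<le> (t - u) powr (\<beta> - 1) * (u powr (\<alpha> - 1) * ML2 \<alpha> \<alpha> (t powr \<alpha>))"
      using phi_ML_partial_sums_bound[OF \<alpha>, of u t n] that
      by (intro mult_left_mono) (auto simp: s_def)
    finally show ?thesis
      by (simp add: h_def mult_ac)
  qed
  have f_tendsto: "(\<lambda>n. f n u) \<longlonglongrightarrow> g u" if "u \<in> {0..t}" for u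
    using phi_ML_sums[OF \<alpha>, of u] that
    unfolding f_def g_def s_def sums_def by (intro tendsto_mult_left) auto
  have f_integrable: "f n integrable_on {0..t}" for n
    using f_integral by blast
  note limit = dominated_convergence[OF f_integrable h_integrable f_le_h f_tendsto]
  show "g integrable_on {0..t}"
    by (rule limit(1))
  have "(\<lambda>n. Gamma \<beta> * (\<Sum>k<n. a k)) \<longlonglongrightarrow> integral {0..t} g"
    using limit(2) integral_unique[OF f_integral] by simp
  then have "(\<lambda>n. Gamma \<beta> * (\<Sum>k<n. a k) / Gamma \<beta>) \<longlonglongrightarrow> integral {0..t} g / Gamma \<beta>"
    by (rule tendsto_divide[OF _ tendsto_const]) (use Gamma_real_pos[OF \<beta>] in simp)
  then show "a sums RL_int \<beta> (phi_ML \<alpha>) t"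
    using Gamma_real_pos[OF \<beta>] by (simp add: sums_def RL_int_def g_def[abs_def])
qed

lemma RL_int_phi_ML_add:
  fixes \<alpha> \<beta> t :: real
  assumes \<alpha>: "\<alpha> > 0" and \<beta>: "\<beta> > 0" and t: "t > 0"
  shows "RL_int \<beta> (phi_ML \<alpha>) t + RL_int (\<beta> + \<alpha>) (phi_ML \<alpha>) t = t powr (\<beta> + \<alpha> - 1) / Gamma (\<beta> + \<alpha>)"
proof -
  define c where "c k = (-1) ^ k * t powr (\<beta> + \<alpha> * (real k + 1) - 1) / Gamma (\<beta> + \<alpha> * (real k + 1))" for k
  have c_sums: "c sums RL_int \<beta> (phi_ML \<alpha>) t"
    unfolding c_def by (rule RL_int_phi_ML(2)[OF \<alpha> \<beta> t])
  have "(\<lambda>k. - c (Suc k)) sums RL_int (\<beta> + \<alpha>) (phi_ML \<alpha>) t"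
  proof -
    have shift: "\<beta> + \<alpha> + \<alpha> * (real k + 1) = \<beta> + \<alpha> * (real (Suc k) + 1)" for k
      by (simp add: algebra_simps)
    have "(\<lambda>k. (-1) ^ k * t powr (\<beta> + \<alpha> * (real (Suc k) + 1) - 1) / Gamma (\<beta> + \<alpha> * (real (Suc k) + 1)))
        sums RL_int (\<beta> + \<alpha>) (phi_ML \<alpha>) t"
      using RL_int_phi_ML(2)[of \<alpha> "\<beta> + \<alpha>" t] \<alpha> \<beta> t unfolding shift by simp
    then show ?thesis
      by (simp add: c_def)
  qed
  from sums_add[OF c_sums this]
  have "(\<lambda>k. c k - c (Suc k)) sums (RL_int \<beta> (phi_ML \<alpha>) t + RL_int (\<beta> + \<alpha>) (phi_ML \<alpha>) t)"
    by simp
  moreover have "(\<lambda>k. c k - c (Suc k)) sums (c 0 - 0)"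
    using c_sums by (intro telescope_sums' summable_LIMSEQ_zero) (auto simp: sums_iff)
  ultimately show ?thesis
    by (simp add: sums_unique2 c_def)
qed

lemma pochhammer_binomial_split:
  fixes a :: "'a::field_char_0"
  shows "pochhammer a n / fact n * (pochhammer (a + of_nat n) k / fact k)
    = of_nat ((n + k) choose n) * (pochhammer a (n + k) / fact (n + k))"
  unfolding pochhammer_product' binomial_fact[OF le_add1] by (simp add: field_simps)

lemma sum_alternating_linear_binomial:
  "(\<Sum>n\<le>N. real n * real (N choose n) * (-1) ^ (N - n)) = (if N = 1 then 1 else 0)"
proof -
  have "(-1::real) ^ (N - n) = (-1) ^ N * (-1) ^ n" if "n \<le> N" for n
    using that by (simp add: power_diff minus_one_power_iff)
  then have "(\<Sum>n\<le>N. real n * real (N choose n) * (-1) ^ (N - n))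
      = (-1) ^ N * (\<Sum>n\<le>N. (-1) ^ n * real n * real (N choose n))"
    by (simp add: sum_distrib_left mult_ac)
  then show ?thesis
    using choose_alternating_linear_sum[of N] by (auto simp: numeral_2_eq_2)
qed

lemma sums_antidiagonal:
  fixes f :: "nat \<Rightarrow> nat \<Rightarrow> real"
  assumes abs_summable: "summable (\<lambda>N. \<Sum>n\<le>N. \<bar>f n (N - n)\<bar>)"
    and rows: "\<And>n. (\<lambda>k. f n k) sums g n"
  shows "g sums (\<Sum>N. \<Sum>n\<le>N. f n (N - n))"
proof -
  define D where "D = Sigma (UNIV :: nat set) (\<lambda>N. {..N})"
  define F where "F = (\<lambda>(n, k). f n k)"
  have bij: "bij_betw (\<lambda>(N, n). (n, N - n)) D UNIV"
    by (rule bij_betw_byWitness[where f' = "\<lambda>(n, k). (n + k, n)"]) (auto simp: D_def)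
  have abs_D: "(\<lambda>(N, n). norm (f n (N - n))) summable_on D"
    unfolding D_def
  proof (rule summable_on_SigmaI[where g = "\<lambda>N. \<Sum>n\<le>N. \<bar>f n (N - n)\<bar>"])
    show "((\<lambda>n. case (N, n) of (N, n) \<Rightarrow> norm (f n (N - n))) has_sum (\<Sum>n\<le>N. \<bar>f n (N - n)\<bar>)) {..N}" for N
      by (rule has_sum_finiteI) simp_all
    show "(\<lambda>N. \<Sum>n\<le>N. \<bar>f n (N - n)\<bar>) summable_on UNIV"
      by (rule summable_nonneg_imp_summable_on_strong[OF abs_summable]) auto
  qed auto
  have diag_norm_summable: "summable (\<lambda>N. norm (\<Sum>n\<le>N. f n (N - n)))"
    by (rule summable_comparison_test'[OF abs_summable]) simp
  have diag_summable: "summable (\<lambda>N. \<Sum>n\<le>N. f n (N - n))"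
    by (rule summable_norm_cancel[OF diag_norm_summable])
  have outer: "((\<lambda>N. \<Sum>n\<le>N. f n (N - n)) has_sum (\<Sum>N. \<Sum>n\<le>N. f n (N - n))) UNIV"
    by (rule norm_summable_imp_has_sum[OF diag_norm_summable summable_sums[OF diag_summable]])
  have "((\<lambda>(N, n). f n (N - n)) has_sum (\<Sum>N. \<Sum>n\<le>N. f n (N - n))) D"
    unfolding D_def
  proof (rule has_sum_SigmaI[OF _ outer])
    show "((\<lambda>n. (\<lambda>(N, n). f n (N - n)) (N, n)) has_sum (\<Sum>n\<le>N. f n (N - n))) {..N}" for N
      by (rule has_sum_finiteI) simp_all
    show "(\<lambda>(N, n). f n (N - n)) summable_on Sigma UNIV (\<lambda>N. {..N})"
      by (rule abs_summable_summable) (use abs_D in \<open>simp add: D_def case_prod_unfold\<close>)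
  qed
  then have total: "(F has_sum (\<Sum>N. \<Sum>n\<le>N. f n (N - n))) UNIV"
    using has_sum_reindex_bij_betw[OF bij, of F] by (simp add: F_def case_prod_unfold)
  have "(\<lambda>(n, k). norm (f n k)) summable_on Sigma UNIV (\<lambda>_. UNIV)"
    using summable_on_reindex_bij_betw[OF bij, of "\<lambda>(n, k). norm (f n k)"] abs_D
    by (simp add: case_prod_unfold)
  then have "(\<lambda>k. norm (f n k)) summable_on UNIV" for n
    by (rule summable_on_SigmaD1) simp
  then have "((\<lambda>k. F (n, k)) has_sum g n) UNIV" for n
    using norm_summable_imp_has_sum[OF summable_on_imp_summable rows] by (simp add: F_def)
  then have "(g has_sum (\<Sum>N. \<Sum>n\<le>N. f n (N - n))) UNIV"
    using has_sum_Sigma'[where f = F and A = UNIV and B = "\<lambda>_. UNIV"] total by simp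
  then show ?thesis
    by (rule has_sum_imp_sums)
qed

lemma P_nal_series_term:
  fixes \<alpha> t :: real and l n k :: nat
  assumes t: "t > 0"
  shows "pochhammer (real l) n / fact n * t powr ((real n + real l) * \<alpha> - 1)
      * (pochhammer (real n + real l) k * (- (t powr \<alpha>)) ^ k
         / (Gamma (\<alpha> * real k + (real n + real l) * \<alpha>) * fact k))
    = real ((n + k) choose n) * (-1) ^ k * (pochhammer (real l) (n + k) / fact (n + k))
      * (t powr ((real (n + k) + real l) * \<alpha> - 1) / Gamma ((real (n + k) + real l) * \<alpha>))"
proof -
  have binomial: "pochhammer (real l) n / fact n * (pochhammer (real n + real l) k / fact k)
      = real ((n + k) choose n) * (pochhammer (real l) (n + k) / fact (n + k))"
    using pochhammer_binomial_split[of "real l" n k] by (simp add: add.commute)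
  have "t powr ((real n + real l) * \<alpha> - 1) * (- (t powr \<alpha>)) ^ k
      = (-1) ^ k * t powr ((real n + real l) * \<alpha> - 1 + \<alpha> * real k)"
    by (rule powr_mult_minus_powr_power[OF t])
  also have "(real n + real l) * \<alpha> - 1 + \<alpha> * real k = (real (n + k) + real l) * \<alpha> - 1"
    by (simp add: algebra_simps)
  finally have power: "t powr ((real n + real l) * \<alpha> - 1) * (- (t powr \<alpha>)) ^ k
      = (-1) ^ k * t powr ((real (n + k) + real l) * \<alpha> - 1)" .
  have Gamma_arg: "\<alpha> * real k + (real n + real l) * \<alpha> = (real (n + k) + real l) * \<alpha>"
    by (simp add: algebra_simps)
  have "pochhammer (real l) n / fact n * t powr ((real n + real l) * \<alpha> - 1)
      * (pochhammer (real n + real l) k * (- (t powr \<alpha>)) ^ k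
         / (Gamma (\<alpha> * real k + (real n + real l) * \<alpha>) * fact k))
    = (pochhammer (real l) n / fact n * (pochhammer (real n + real l) k / fact k))
      * (t powr ((real n + real l) * \<alpha> - 1) * (- (t powr \<alpha>)) ^ k)
      / Gamma (\<alpha> * real k + (real n + real l) * \<alpha>)"
    by (simp add: mult_ac)
  then show ?thesis
    unfolding binomial power Gamma_arg by (simp add: mult_ac)
qed

lemma P_nal_expansion:
  fixes \<alpha> t :: real and l n :: nat
  assumes \<alpha>: "\<alpha> > 0" and t: "t > 0"
  shows "(\<lambda>k. real ((n + k) choose n) * (-1) ^ k * (pochhammer (real l) (n + k) / fact (n + k))
      * (t powr ((real (n + k) + real l) * \<alpha> - 1) / Gamma ((real (n + k) + real l) * \<alpha>)))
    sums P_nal n \<alpha> l t"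
proof -
  have "(\<lambda>k. pochhammer (real l) n / fact n * t powr ((real n + real l) * \<alpha> - 1)
      * (pochhammer (real n + real l) k * (- (t powr \<alpha>)) ^ k
         / (Gamma (\<alpha> * real k + (real n + real l) * \<alpha>) * fact k)))
    sums P_nal n \<alpha> l t"
    unfolding P_nal_def by (intro sums_mult sums_ML3 \<alpha>)
  then show ?thesis
    unfolding P_nal_series_term[OF t] .
qed

lemma sum_linear_binomial_le_four_power:
  "(\<Sum>n\<le>N. real n * real (N choose n)) \<le> 4 ^ N"
proof -
  have "(\<Sum>n\<le>N. real n * real (N choose n)) \<le> (\<Sum>n\<le>N. real N * real (N choose n))"
    by (intro sum_mono mult_right_mono) auto
  also have "\<dots> = real N * 2 ^ N"
    by (simp add: sum_distrib_left[symmetric] choose_row_sum flip: of_nat_sum)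
  also have "\<dots> \<le> 2 ^ N * 2 ^ N"
    using less_imp_le[OF less_exp[of N]] by (intro mult_right_mono) (simp_all add: of_nat_le_iff[symmetric])
  also have "\<dots> = 4 ^ N"
    by (simp flip: power_mult_distrib)
  finally show ?thesis .
qed

lemma sums_mean_P_nal:
  fixes \<alpha> t :: real and l :: nat
  assumes \<alpha>: "\<alpha> > 0" and t: "t > 0" and l: "l \<ge> 1"
  shows "(\<lambda>n. real n * P_nal n \<alpha> l t) sums (real l * t powr (real l * \<alpha> + \<alpha> - 1) / Gamma ((real l + 1) * \<alpha>))"
proof -
  define c where "c N = pochhammer (real l) N / fact N
    * (t powr ((real N + real l) * \<alpha> - 1) / Gamma ((real N + real l) * \<alpha>))" for N
  define f where "f n k = real n * (real ((n + k) choose n) * (-1) ^ k * c (n + k))" for n k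
  have c_nonneg: "c N \<ge> 0" for N
    using \<alpha> l by (simp add: c_def pochhammer_nonneg)
  have rows: "(\<lambda>k. f n k) sums (real n * P_nal n \<alpha> l t)" for n
    using sums_mult[OF P_nal_expansion[OF \<alpha> t, of n l], of "real n"] by (simp add: f_def c_def mult_ac)
  have diagonal: "(\<Sum>n\<le>N. f n (N - n)) = (\<Sum>n\<le>N. real n * real (N choose n) * (-1) ^ (N - n)) * c N" for N
    unfolding sum_distrib_right by (intro sum.cong) (auto simp: f_def)
  have abs_summable: "summable (\<lambda>N. \<Sum>n\<le>N. \<bar>f n (N - n)\<bar>)"
  proof (rule summable_comparison_test')
    show "summable (\<lambda>N. t powr (real l * \<alpha> - 1)
        * (pochhammer (real l) N * (4 * t powr \<alpha>) ^ N / (Gamma (\<alpha> * real N + real l * \<alpha>) * fact N)))"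
      by (intro summable_mult summable_ML3_terms \<alpha>)
    fix N
    have "norm (\<Sum>n\<le>N. \<bar>f n (N - n)\<bar>) = (\<Sum>n\<le>N. real n * real (N choose n)) * c N"
      unfolding real_norm_def abs_sum_abs sum_distrib_right using c_nonneg
      by (intro sum.cong) (auto simp: f_def abs_mult)
    also have "\<dots> \<le> 4 ^ N * c N"
      by (rule mult_right_mono[OF sum_linear_binomial_le_four_power c_nonneg])
    also have "\<dots> = t powr (real l * \<alpha> - 1)
        * (pochhammer (real l) N * (4 * t powr \<alpha>) ^ N / (Gamma (\<alpha> * real N + real l * \<alpha>) * fact N))"
    proof -
      have "t powr ((real N + real l) * \<alpha> - 1) = t powr (real l * \<alpha> - 1) * (t powr \<alpha>) ^ N"
        using t by (simp add: powr_power powr_add[symmetric] algebra_simps)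
      moreover have "(real N + real l) * \<alpha> = \<alpha> * real N + real l * \<alpha>"
        by (simp add: algebra_simps)
      ultimately show ?thesis
        by (simp add: c_def power_mult_distrib mult_ac)
    qed
    finally show "norm (\<Sum>n\<le>N. \<bar>f n (N - n)\<bar>) \<le> t powr (real l * \<alpha> - 1)
        * (pochhammer (real l) N * (4 * t powr \<alpha>) ^ N / (Gamma (\<alpha> * real N + real l * \<alpha>) * fact N))" .
  qed
  have "(\<lambda>N. \<Sum>n\<le>N. f n (N - n)) = (\<lambda>N. if N = 1 then c 1 else 0)"
    by (simp add: fun_eq_iff diagonal sum_alternating_linear_binomial)
  then have "(\<Sum>N. \<Sum>n\<le>N. f n (N - n)) = c 1"
    using sums_single[of 1 "\<lambda>_. c 1"] by (simp add: sums_iff)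
  moreover have "c 1 = real l * t powr (real l * \<alpha> + \<alpha> - 1) / Gamma ((real l + 1) * \<alpha>)"
    by (simp add: c_def algebra_simps)
  ultimately show ?thesis
    using sums_antidiagonal[OF abs_summable rows] by simp
qed

lemma m_al_eq:
  fixes \<alpha> s :: real and l :: nat
  assumes \<alpha>: "\<alpha> > 0" and s: "s \<ge> 0" and l: "l \<ge> 1"
  shows "m_al \<alpha> l s = real l * s powr (real l * \<alpha> + \<alpha> - 1) / Gamma ((real l + 1) * \<alpha>)"
proof (cases "s = 0")
  case True
  then show ?thesis
    by (simp add: m_al_def P_nal_def)
next
  case False
  with s have "s > 0"
    by simp
  from sums_mean_P_nal[OF \<alpha> this l] show ?thesis
    unfolding m_al_def by (rule sums_unique[symmetric])
qed

lemma lconv_m_al_phi_ML: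
  fixes \<alpha> t :: real and l :: nat
  assumes \<alpha>: "\<alpha> > 0" and l: "l \<ge> 1" and t: "t > 0"
  shows "(\<lambda>u. m_al \<alpha> l (t - u) * phi_ML \<alpha> u) integrable_on {0..t}"
    and "lconv (m_al \<alpha> l) (phi_ML \<alpha>) t = real l * RL_int ((real l + 1) * \<alpha>) (phi_ML \<alpha>) t"
proof -
  define \<beta> where "\<beta> = (real l + 1) * \<alpha>"
  have \<beta>: "\<beta> > 0"
    using \<alpha> by (simp add: \<beta>_def)
  have m_eq: "m_al \<alpha> l (t - u) * phi_ML \<alpha> u = real l / Gamma \<beta> * ((t - u) powr (\<beta> - 1) * phi_ML \<alpha> u)"
    if "u \<in> {0..t}" for u
  proof -
    have "real l * \<alpha> + \<alpha> - 1 = \<beta> - 1"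
      by (simp add: \<beta>_def algebra_simps)
    then show ?thesis
      using m_al_eq[OF \<alpha> _ l, of "t - u"] that by (simp add: \<beta>_def)
  qed
  have "(\<lambda>u. m_al \<alpha> l (t - u) * phi_ML \<alpha> u) integrable_on {0..t}
      \<longleftrightarrow> (\<lambda>u. real l / Gamma \<beta> * ((t - u) powr (\<beta> - 1) * phi_ML \<alpha> u)) integrable_on {0..t}"
    by (rule integrable_cong) (rule m_eq)
  then show "(\<lambda>u. m_al \<alpha> l (t - u) * phi_ML \<alpha> u) integrable_on {0..t}"
    using integrable_on_cmult_left[OF RL_int_phi_ML(1)[OF \<alpha> \<beta> t], of "real l / Gamma \<beta>"] by simp
  have "lconv (m_al \<alpha> l) (phi_ML \<alpha>) t = real l / Gamma \<beta> * integral {0..t} (\<lambda>u. (t - u) powr (\<beta> - 1) * phi_ML \<alpha> u)"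
  proof -
    have "integral {0..t} (\<lambda>u. m_al \<alpha> l (t - u) * phi_ML \<alpha> u)
        = integral {0..t} (\<lambda>u. real l / Gamma \<beta> * ((t - u) powr (\<beta> - 1) * phi_ML \<alpha> u))"
      by (rule integral_cong) (rule m_eq)
    then show ?thesis
      by (simp add: lconv_def)
  qed
  then show "lconv (m_al \<alpha> l) (phi_ML \<alpha>) t = real l * RL_int ((real l + 1) * \<alpha>) (phi_ML \<alpha>) t"
    by (simp add: RL_int_def \<beta>_def)
qed

theorem mainTheorem11:
  fixes \<alpha> :: real and l :: nat
  assumes "0 < \<alpha>" and "\<alpha> < 1" and "l \<ge> 1"
  shows "\<forall>t>0.
      (\<lambda>n. real n * P_nal n \<alpha> l t) sums m_al \<alpha> l t
    \<and> ((\<lambda>k. t powr (\<alpha> * real l - 1) * ML3 (real l) \<alpha> (\<alpha> * real l) (- (1 - exp (- k)) * t powr \<alpha>))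
         has_real_derivative (- m_al \<alpha> l t)) (at 0)
    \<and> m_al \<alpha> l t = real l * t powr (real l * \<alpha> + \<alpha> - 1) / Gamma ((real l + 1) * \<alpha>)
    \<and> (\<lambda>u. (t - u) powr (\<alpha> * real l - 1) * phi_ML \<alpha> u) integrable_on {0..t}
    \<and> (\<lambda>u. m_al \<alpha> l (t - u) * phi_ML \<alpha> u) integrable_on {0..t}
    \<and> m_al \<alpha> l t = real l * RL_int (\<alpha> * real l) (phi_ML \<alpha>) t + lconv (m_al \<alpha> l) (phi_ML \<alpha>) t"
proof (intro allI impI conjI)
  fix t :: real
  assume t: "t > 0"
  have \<alpha>: "\<alpha> > 0" and l: "l \<ge> 1" and \<beta>: "\<alpha> * real l > 0"
    using assms by auto
  have m_t: "m_al \<alpha> l t = real l * t powr (real l * \<alpha> + \<alpha> - 1) / Gamma ((real l + 1) * \<alpha>)"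
    using m_al_eq[OF \<alpha> _ l] t by simp
  then show "m_al \<alpha> l t = real l * t powr (real l * \<alpha> + \<alpha> - 1) / Gamma ((real l + 1) * \<alpha>)" .
  show "(\<lambda>n. real n * P_nal n \<alpha> l t) sums m_al \<alpha> l t"
    unfolding m_t by (rule sums_mean_P_nal[OF \<alpha> t l])
  show "((\<lambda>k. t powr (\<alpha> * real l - 1) * ML3 (real l) \<alpha> (\<alpha> * real l) (- (1 - exp (- k)) * t powr \<alpha>))
      has_real_derivative (- m_al \<alpha> l t)) (at 0)"
    using DERIV_cmult[OF ML3_one_minus_exp_has_real_derivative_0[OF \<alpha>], of "t powr (\<alpha> * real l - 1)" "real l" "\<alpha> * real l" "t powr \<alpha>"] t
    by (simp add: m_t powr_add[symmetric] algebra_simps)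
  show "(\<lambda>u. (t - u) powr (\<alpha> * real l - 1) * phi_ML \<alpha> u) integrable_on {0..t}"
    by (rule RL_int_phi_ML(1)[OF \<alpha> \<beta> t])
  show "(\<lambda>u. m_al \<alpha> l (t - u) * phi_ML \<alpha> u) integrable_on {0..t}"
    by (rule lconv_m_al_phi_ML(1)[OF \<alpha> l t])
  have "RL_int (\<alpha> * real l) (phi_ML \<alpha>) t + RL_int (\<alpha> * real l + \<alpha>) (phi_ML \<alpha>) t
      = t powr (\<alpha> * real l + \<alpha> - 1) / Gamma (\<alpha> * real l + \<alpha>)"
    by (rule RL_int_phi_ML_add[OF \<alpha> \<beta> t])
  then show "m_al \<alpha> l t = real l * RL_int (\<alpha> * real l) (phi_ML \<alpha>) t + lconv (m_al \<alpha> l) (phi_ML \<alpha>) t"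
    unfolding lconv_m_al_phi_ML(2)[OF \<alpha> l t] m_t
    by (simp add: algebra_simps flip: distrib_left)
qed

end
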